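(* Let $k \ge 1$, $N \ge 0$ and $0 \le \alpha \le N$ be integers and let $T = [t_1,\dots,t_k]$ with $t_1 \ge t_2 \ge \dots \ge t_k \ge 0$. Let $X = \{x \in \mathbb{Z}_{\ge 0}^k : \sum_{i=1}^k x_i \le N\}$ and let $f: X \to \mathbb{R}$ be the adversarial objective $f(x) = \min_{\delta \in \Delta_\alpha(x)} \sum_{i=1}^k t_i H(x_i - \delta_i)$. Then there exists $\tilde{x} \in X$ with $f(\tilde{x}) = \max_{x \in X} f(x)$ and $\tilde{x}_1 \ge \tilde{x}_2 \ge \dots \ge \tilde{x}_k$.
   Context: $H(n) = \min(1,n)$ for integers $n \ge 0$ (the indicator that a task with $n$ surviving agents is completed). For $x \in \mathbb{Z}_{\ge 0}^k$, the set of admissible attacks is $\Delta_\alpha(x) = \{\delta \in \mathbb{Z}_{\ge 0}^k : \sum_{i=1}^k \delta_i \le \alpha \text{ and } \delta_i \le x_i \text{ for all } i\}$; $\delta_i$ is the number of agents on task $i$ disabled by an adversary. Problem 2 (adversarial failure) is to maximize $f$ over $X$. *)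

theory Defs
  imports Complex_Main
begin

text \<open>Vectors in Z_{>=0}^k are represented as functions nat => nat, indices 0..<k,
  with value 0 outside {0..<k} (extensional).\<close>

definition H :: "nat \<Rightarrow> nat" where
  "H n = min 1 n"

definition feasX :: "nat \<Rightarrow> nat \<Rightarrow> (nat \<Rightarrow> nat) set" where
  "feasX k N = {x. (\<forall>i\<ge>k. x i = 0) \<and> (\<Sum>i<k. x i) \<le> N}"

definition attacks :: "nat \<Rightarrow> nat \<Rightarrow> (nat \<Rightarrow> nat) \<Rightarrow> (nat \<Rightarrow> nat) set" where
  "attacks k \<alpha> x = {\<delta>. (\<forall>i\<ge>k. \<delta> i = 0) \<and> (\<Sum>i<k. \<delta> i) \<le> \<alpha> \<and> (\<forall>i<k. \<delta> i \<le> x i)}"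

definition adv_obj :: "nat \<Rightarrow> nat \<Rightarrow> (nat \<Rightarrow> real) \<Rightarrow> (nat \<Rightarrow> nat) \<Rightarrow> real" where
  "adv_obj k \<alpha> t x = Min ((\<lambda>\<delta>. \<Sum>i<k. t i * real (H (x i - \<delta> i))) ` attacks k \<alpha> x)"

end

theory Submission
  imports Defs "HOL-Combinatorics.Permutations"
begin

text \<open>If task i holds fewer agents than task j although t i \<ge> t j, exchanging the two
  allocations never hurts: any attack on the exchanged allocation can be answered by an attack
  on the original one that leaves at most as much value alive. Among all maximisers of the
  adversarial objective pick one minimising \<Sum> l * x l; an inversion x i < x j with i < j
  could be exchanged to give another maximiser with smaller potential, so this one is sorted.\<close>

lemma sum_transpose_weights_diff:
  fixes w a :: "'b \<Rightarrow> 'a::comm_ring"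
  assumes "finite S" "i \<in> S" "j \<in> S"
  shows "(\<Sum>l\<in>S. w (transpose i j l) * a l) - (\<Sum>l\<in>S. w l * a l) = (w i - w j) * (a j - a i)"
proof -
  have "(\<Sum>l\<in>S. w (transpose i j l) * a l) - (\<Sum>l\<in>S. w l * a l)
      = (\<Sum>l\<in>S. (w (transpose i j l) - w l) * a l)"
    by (simp add: sum_subtractf left_diff_distrib)
  also have "\<dots> = (\<Sum>l\<in>{i,j}. (w (transpose i j l) - w l) * a l)"
    using assms by (intro sum.mono_neutral_right) auto
  also have "\<dots> = (w i - w j) * (a j - a i)"
    by (cases "i = j") (simp_all add: algebra_simps)
  finally show ?thesis .
qed

lemma finite_bounded_funs:
  "finite {f :: nat \<Rightarrow> nat. (\<forall>i\<ge>k. f i = 0) \<and> (\<forall>i<k. f i \<le> B)}"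
  by (rule finite_subset[OF _ finite_set_of_finite_funs[of "{..<k}" "{..B}" 0]]) auto

lemma finite_attacks: "finite (attacks k \<alpha> x)"
proof -
  have "attacks k \<alpha> x \<subseteq> {f. (\<forall>i\<ge>k. f i = 0) \<and> (\<forall>i<k. f i \<le> \<alpha>)}"
  proof (intro subsetI CollectI conjI allI impI)
    fix \<delta> i assume "\<delta> \<in> attacks k \<alpha> x"
    then show "i \<ge> k \<Longrightarrow> \<delta> i = 0" and "i < k \<Longrightarrow> \<delta> i \<le> \<alpha>"
      unfolding attacks_def using member_le_sum[of i "{..<k}" \<delta>] by auto
  qed
  then show ?thesis using finite_bounded_funs by (rule finite_subset)
qed

lemma finite_feasX: "finite (feasX k N)"
proof -
  have "feasX k N \<subseteq> {f. (\<forall>i\<ge>k. f i = 0) \<and> (\<forall>i<k. f i \<le> N)}"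
  proof (intro subsetI CollectI conjI allI impI)
    fix x i assume "x \<in> feasX k N"
    then show "i \<ge> k \<Longrightarrow> x i = 0" and "i < k \<Longrightarrow> x i \<le> N"
      unfolding feasX_def using member_le_sum[of i "{..<k}" x] by auto
  qed
  then show ?thesis using finite_bounded_funs by (rule finite_subset)
qed

definition surviving_value :: "nat \<Rightarrow> (nat \<Rightarrow> real) \<Rightarrow> (nat \<Rightarrow> nat) \<Rightarrow> (nat \<Rightarrow> nat) \<Rightarrow> real" where
  "surviving_value k t x \<delta> = (\<Sum>i<k. t i * real (H (x i - \<delta> i)))"

lemma adv_obj_le_surviving_value:
  "\<delta> \<in> attacks k \<alpha> x \<Longrightarrow> adv_obj k \<alpha> t x \<le> surviving_value k t x \<delta>"
  unfolding adv_obj_def surviving_value_def using finite_attacks by (intro Min_le) auto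

lemma adv_obj_attained:
  obtains \<delta> where "\<delta> \<in> attacks k \<alpha> x" "adv_obj k \<alpha> t x = surviving_value k t x \<delta>"
proof -
  have "(\<lambda>_. 0) \<in> attacks k \<alpha> x" unfolding attacks_def by simp
  then have "adv_obj k \<alpha> t x \<in> surviving_value k t x ` attacks k \<alpha> x"
    unfolding adv_obj_def surviving_value_def using finite_attacks by (intro Min_in) auto
  then show ?thesis using that by blast
qed

lemma attack_on_transposed_dominated:
  assumes ij: "i < k" "j < k" "i \<noteq> j"
    and x: "x i \<le> x j" and t: "t j \<le> t i" "0 \<le> t j"
    and \<delta>': "\<delta>' \<in> attacks k \<alpha> (x \<circ> transpose i j)"
  obtains \<delta> where "\<delta> \<in> attacks k \<alpha> x"
    "surviving_value k t x \<delta> \<le> surviving_value k t (x \<circ> transpose i j) \<delta>'"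
proof -
  let ?\<tau> = "transpose i j"
  have perm: "?\<tau> permutes {..<k}"
    using ij by (intro permutes_swap_id) auto
  have \<delta>'_zero: "\<forall>l\<ge>k. \<delta>' l = 0" and \<delta>'_sum: "sum \<delta>' {..<k} \<le> \<alpha>"
    and \<delta>'_le: "\<forall>l<k. \<delta>' l \<le> x (?\<tau> l)"
    using \<delta>' unfolding attacks_def by auto
  have \<delta>'_i: "\<delta>' i \<le> x j" and \<delta>'_j: "\<delta>' j \<le> x i"
    using \<delta>'_le ij by (metis transpose_apply_first, metis transpose_apply_second)
  consider (ordered) "H (x i - \<delta>' j) \<le> H (x j - \<delta>' i)" | (exhausted) "\<delta>' i = x j" "\<delta>' j < x i"
    using \<delta>'_i unfolding H_def by linarith
  then show thesis
  proof cases
    case ordered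
    let ?\<delta> = "\<delta>' \<circ> ?\<tau>"
    let ?a = "\<lambda>l. real (H (x l - \<delta>' (?\<tau> l)))"
    have "\<delta>' (?\<tau> l) \<le> x l" if "l < k" for l
      using \<delta>'_le permutes_in_image[OF perm] that by (metis lessThan_iff transpose_involutory)
    then have "?\<delta> \<in> attacks k \<alpha> x"
      unfolding attacks_def using \<delta>'_zero \<delta>'_sum ij sum.permute[OF perm, of \<delta>'] by auto
    moreover have "surviving_value k t (x \<circ> ?\<tau>) \<delta>' = (\<Sum>l<k. t (?\<tau> l) * ?a l)"
      unfolding surviving_value_def by (subst sum.permute[OF perm]) simp
    moreover have "surviving_value k t x ?\<delta> = (\<Sum>l<k. t l * ?a l)"
      unfolding surviving_value_def by simp
    moreover have "(t i - t j) * (?a j - ?a i) \<ge> 0"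
      using ordered t by simp
    ultimately show thesis
      using that sum_transpose_weights_diff[of "{..<k}" i j t ?a] ij by simp
  next
    case exhausted
    \<comment> \<open>\<delta>' wipes out task i of the swapped allocation; wiping out task i of x instead
      is no more expensive because x i \<le> x j.\<close>
    let ?\<delta> = "\<delta>'(i := x i)"
    have "sum ?\<delta> {..<k} \<le> sum \<delta>' {..<k}"
      using exhausted x by (intro sum_mono) auto
    moreover have "?\<delta> l \<le> x l" if "l < k" for l
      using \<delta>'_le \<delta>'_j x that by (cases "l = i"; cases "l = j") auto
    ultimately have "?\<delta> \<in> attacks k \<alpha> x"
      unfolding attacks_def using \<delta>'_zero \<delta>'_sum ij by auto
    moreover have "surviving_value k t x ?\<delta> \<le> surviving_value k t (x \<circ> ?\<tau>) \<delta>'"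
      unfolding surviving_value_def
    proof (intro sum_mono)
      fix l assume "l \<in> {..<k}"
      show "t l * real (H (x l - ?\<delta> l)) \<le> t l * real (H ((x \<circ> ?\<tau>) l - \<delta>' l))"
        using exhausted t ij
        by (cases "l = i"; cases "l = j") (auto simp: H_def intro: mult_left_le)
    qed
    ultimately show thesis using that by blast
  qed
qed

lemma adv_obj_transpose_mono:
  assumes "i < k" "j < k" "i \<noteq> j" "x i \<le> x j" "t j \<le> t i" "0 \<le> t j"
  shows "adv_obj k \<alpha> t x \<le> adv_obj k \<alpha> t (x \<circ> transpose i j)"
proof -
  obtain \<delta>' where \<delta>': "\<delta>' \<in> attacks k \<alpha> (x \<circ> transpose i j)"
    "adv_obj k \<alpha> t (x \<circ> transpose i j) = surviving_value k t (x \<circ> transpose i j) \<delta>'"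
    by (rule adv_obj_attained)
  obtain \<delta> where \<delta>: "\<delta> \<in> attacks k \<alpha> x"
    "surviving_value k t x \<delta> \<le> surviving_value k t (x \<circ> transpose i j) \<delta>'"
    using attack_on_transposed_dominated[OF assms \<delta>'(1)] .
  have "adv_obj k \<alpha> t x \<le> surviving_value k t x \<delta>"
    using \<delta>(1) by (rule adv_obj_le_surviving_value)
  with \<delta>(2) \<delta>'(2) show ?thesis by linarith
qed

lemma transpose_in_feasX:
  assumes "i < k" "j < k" "x \<in> feasX k N"
  shows "x \<circ> transpose i j \<in> feasX k N"
proof -
  have "transpose i j permutes {..<k}"
    using assms by (intro permutes_swap_id) auto
  then show ?thesis
    using assms sum.permute[of "transpose i j" "{..<k}" x] unfolding feasX_def by auto
qed

lemma index_weighted_sum_transpose_less: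
  fixes x :: "nat \<Rightarrow> nat"
  assumes "i < j" "j < k" "x i < x j"
  shows "(\<Sum>l<k. l * (x \<circ> transpose i j) l) < (\<Sum>l<k. l * x l)"
proof -
  have perm: "transpose i j permutes {..<k}"
    using assms by (intro permutes_swap_id) auto
  have "(\<Sum>l<k. l * (x \<circ> transpose i j) l) = (\<Sum>l<k. transpose i j l * x l)"
    by (subst sum.permute[OF perm]) simp
  moreover have "int (\<Sum>l<k. transpose i j l * x l) - int (\<Sum>l<k. l * x l)
      = (int i - int j) * (int (x j) - int (x i))"
    using sum_transpose_weights_diff[of "{..<k}" i j int "\<lambda>l. int (x l)"] assms by simp
  moreover have "(int i - int j) * (int (x j) - int (x i)) < 0"
    using assms by (simp add: mult_neg_pos)
  ultimately show ?thesis by linarith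
qed

theorem proposition1:
  fixes k N \<alpha> :: nat and t :: "nat \<Rightarrow> real"
  assumes "k \<ge> 1" and "\<alpha> \<le> N"
    and "\<And>i j. i \<le> j \<Longrightarrow> j < k \<Longrightarrow> t j \<le> t i"
    and "\<And>i. i < k \<Longrightarrow> t i \<ge> 0"
  shows "\<exists>xt \<in> feasX k N.
           adv_obj k \<alpha> t xt = Max (adv_obj k \<alpha> t ` feasX k N) \<and>
           (\<forall>i j. i \<le> j \<longrightarrow> j < k \<longrightarrow> xt j \<le> xt i)"
proof -
  let ?f = "adv_obj k \<alpha> t"
  let ?maximiser = "\<lambda>x. x \<in> feasX k N \<and> ?f x = Max (?f ` feasX k N)"
  have "(\<lambda>_. 0) \<in> feasX k N" unfolding feasX_def by simp
  then have "Max (?f ` feasX k N) \<in> ?f ` feasX k N"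
    using finite_feasX by (intro Max_in) auto
  then obtain x0 where "?maximiser x0" by auto
  then obtain x where x: "?maximiser x"
    and least: "\<And>y. ?maximiser y \<Longrightarrow> (\<Sum>l<k. l * x l) \<le> (\<Sum>l<k. l * y l)"
    using ex_has_least_nat[of ?maximiser x0 "\<lambda>x. \<Sum>l<k. l * x l"] by blast
  have "x j \<le> x i" if "i \<le> j" "j < k" for i j
  proof (rule ccontr)
    assume "\<not> x j \<le> x i"
    then have inv: "x i < x j" "i < j" using that by (auto simp: le_less)
    let ?y = "x \<circ> transpose i j"
    have "?y \<in> feasX k N" using x that by (intro transpose_in_feasX) auto
    moreover have "?f x \<le> ?f ?y"
      using inv that assms(3,4) by (intro adv_obj_transpose_mono) auto
    ultimately have "?maximiser ?y"
      using x finite_feasX by (metis Max_ge antisym finite_imageI imageI)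
    then show False
      using least index_weighted_sum_transpose_less[OF inv(2) that(2) inv(1)] by fastforce
  qed
  then show ?thesis using x by blast
qed

end
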